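(* Let $L$ be an $R_0$-algebra, $k\in[0,1)$, and $\mu:L\to[0,1]$ a fuzzy subset. The following are equivalent: (1) $\mu$ is an $(\in,\in\vee q_k)$-fuzzy fated filter of $L$; (2) for every $t\in(0,1]$, the set $[\mu]_t^k=\{x\in L\mid \mu(x)\ge t \text{ or } \mu(x)+t+k>1\}$ is either empty or a fated filter of $L$.
   Context: An $R_0$-algebra is a bounded distributive lattice $(L,\wedge,\vee,0,1)$ with an order-reversing involution $\neg$ and a binary operation $\to$ such that for all $x,y,z\in L$: $x\to y=\neg y\to\neg x$; $1\to x=x$; $(y\to z)\wedge((x\to y)\to(x\to z))=y\to z$; $x\to(y\to z)=y\to(x\to z)$; $x\to(y\vee z)=(x\to y)\vee(x\to z)$; $(x\to y)\vee((x\to y)\to(\neg x\vee y))=1$. A fated filter of $L$ is a nonempty subset $A\subseteq L$ with $1\in A$ such that for all $x,y\in L$ and $a\in A$, $a\to((x\to y)\to x)\in A$ implies $x\in A$. For $x\in L$, $t\in(0,1]$: $x_t\in\mu$ iff $\mu(x)\ge t$; $x_t\,q_k\,\mu$ iff $\mu(x)+t+k>1$; $x_t\in\vee q_k\,\mu$ iff $x_t\in\mu$ or $x_t\,q_k\,\mu$. $\mu$ is an $(\in,\in\vee q_k)$-fuzzy fated filter of $L$ if (i) for all $x\in L$, $t\in(0,1]$: $x_t\in\mu\Rightarrow 1_t\in\vee q_k\,\mu$; and (ii) for all $x,a,y\in L$, $t,s\in(0,1]$: if $(a\to((x\to y)\to x))_t\in\mu$ and $a_s\in\mu$ then $x_{\min\{t,s\}}\in\vee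 q_k\,\mu$. *)

theory Defs
  imports Main "HOL.Real"
begin

text \<open>An R0-algebra: the carrier is the whole type 'a, which is a bounded distributive
lattice (bot = 0, top = 1, inf, sup); neg is an order-reversing involution and imp the
binary operation, subject to the R0 axioms.\<close>

definition R0_algebra :: "('a::{bounded_lattice,distrib_lattice} \<Rightarrow> 'a) \<Rightarrow> ('a \<Rightarrow> 'a \<Rightarrow> 'a) \<Rightarrow> bool" where
  "R0_algebra neg imp \<longleftrightarrow>
     (\<forall>x. neg (neg x) = x) \<and>
     (\<forall>x y. x \<le> y \<longrightarrow> neg y \<le> neg x) \<and>
     (\<forall>x y. imp x y = imp (neg y) (neg x)) \<and>
     (\<forall>x. imp top x = x) \<and>
     (\<forall>x y z. inf (imp y z) (imp (imp x y) (imp x z)) = imp y z) \<and>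
     (\<forall>x y z. imp x (imp y z) = imp y (imp x z)) \<and>
     (\<forall>x y z. imp x (sup y z) = sup (imp x y) (imp x z)) \<and>
     (\<forall>x y. sup (imp x y) (imp (imp x y) (sup (neg x) y)) = top)"

definition fated_filter :: "('a::{bounded_lattice,distrib_lattice} \<Rightarrow> 'a \<Rightarrow> 'a) \<Rightarrow> 'a set \<Rightarrow> bool" where
  "fated_filter imp A \<longleftrightarrow>
     A \<noteq> {} \<and> top \<in> A \<and>
     (\<forall>x y a. a \<in> A \<longrightarrow> imp a (imp (imp x y) x) \<in> A \<longrightarrow> x \<in> A)"

definition fp_in :: "('a \<Rightarrow> real) \<Rightarrow> 'a \<Rightarrow> real \<Rightarrow> bool" where
  "fp_in \<mu> x t \<longleftrightarrow> \<mu> x \<ge> t"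

definition fp_q :: "real \<Rightarrow> ('a \<Rightarrow> real) \<Rightarrow> 'a \<Rightarrow> real \<Rightarrow> bool" where
  "fp_q k \<mu> x t \<longleftrightarrow> \<mu> x + t + k > 1"

definition fp_in_or_q :: "real \<Rightarrow> ('a \<Rightarrow> real) \<Rightarrow> 'a \<Rightarrow> real \<Rightarrow> bool" where
  "fp_in_or_q k \<mu> x t \<longleftrightarrow> fp_in \<mu> x t \<or> fp_q k \<mu> x t"

definition in_q_fuzzy_fated_filter ::
  "('a::{bounded_lattice,distrib_lattice} \<Rightarrow> 'a \<Rightarrow> 'a) \<Rightarrow> real \<Rightarrow> ('a \<Rightarrow> real) \<Rightarrow> bool" where
  "in_q_fuzzy_fated_filter imp k \<mu> \<longleftrightarrow>
     (\<forall>x t. 0 < t \<and> t \<le> 1 \<longrightarrow> fp_in \<mu> x t \<longrightarrow> fp_in_or_q k \<mu> top t) \<and>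
     (\<forall>x a y t s. 0 < t \<and> t \<le> 1 \<and> 0 < s \<and> s \<le> 1 \<longrightarrow>
        fp_in \<mu> (imp a (imp (imp x y) x)) t \<longrightarrow> fp_in \<mu> a s \<longrightarrow>
        fp_in_or_q k \<mu> x (min t s))"

definition level_set_k :: "real \<Rightarrow> ('a \<Rightarrow> real) \<Rightarrow> real \<Rightarrow> 'a set" where
  "level_set_k k \<mu> t = {x. \<mu> x \<ge> t \<or> \<mu> x + t + k > 1}"

end

theory Submission
  imports Defs
begin

text \<open>For a fixed level \<open>t > 0\<close>, membership \<open>x\<^sub>t \<in>\<or>q\<^sub>k \<mu>\<close> depends only on the value \<open>\<mu> x\<close>, is
upward closed, closed under \<open>min\<close>, and always holds for the value \<open>(1 - k)/2\<close>; conversely, for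
levels \<open>t \<le> (1 - k)/2\<close> the alternative \<open>q\<^sub>k\<close> already forces \<open>\<in>\<close>. Hence \<open>\<mu>\<close> is an
\<open>(\<in>,\<in>\<or>q\<^sub>k)\<close>-fuzzy fated filter iff \<open>\<mu> 1 \<ge> min (\<mu> x) ((1 - k)/2)\<close> and
\<open>\<mu> x \<ge> min (\<mu> (a \<rightarrow> ((x \<rightarrow> y) \<rightarrow> x))) (\<mu> a) ((1 - k)/2)\<close>, and these inequalities say exactly that
every nonempty \<open>[\<mu>]\<^sub>t\<^sup>k\<close> is a fated filter.\<close>

lemma mem_level_set_k_of_min_le:
  assumes "0 < t" and "a \<in> level_set_k k \<mu> t" and "b \<in> level_set_k k \<mu> t"
    and "min (min (\<mu> a) (\<mu> b)) ((1 - k) / 2) \<le> \<mu> c"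
  shows "c \<in> level_set_k k \<mu> t"
proof -
  consider "\<mu> a \<le> \<mu> c" | "\<mu> b \<le> \<mu> c" | "(1 - k) / 2 \<le> \<mu> c"
    using assms(4) by (metis min_def)
  then show ?thesis
  proof cases
    case 3
    then show ?thesis using \<open>0 < t\<close> by (cases "t \<le> (1 - k) / 2") (auto simp: level_set_k_def)
  qed (use assms(2,3) in \<open>auto simp: level_set_k_def\<close>)
qed

lemma fp_in_if_fp_in_or_q_below_half:
  assumes "t \<le> (1 - k) / 2" and "fp_in_or_q k \<mu> x t"
  shows "fp_in \<mu> x t"
  using assms by (auto simp: fp_in_or_q_def fp_in_def fp_q_def)

lemma fp_in_or_q_iff_mem_level_set_k:
  "fp_in_or_q k \<mu> x t \<longleftrightarrow> x \<in> level_set_k k \<mu> t"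
  by (auto simp: fp_in_or_q_def fp_in_def fp_q_def level_set_k_def)

lemma in_q_fuzzy_fated_filter_top_bound:
  assumes "in_q_fuzzy_fated_filter imp k \<mu>"
    and "k < 1" and "\<forall>x. 0 \<le> \<mu> x \<and> \<mu> x \<le> 1"
  shows "min (\<mu> x) ((1 - k) / 2) \<le> \<mu> top"
proof (cases "\<mu> x = 0")
  case True
  then show ?thesis using assms(3) by (metis min.coboundedI1)
next
  case False
  define t where "t = min (\<mu> x) ((1 - k) / 2)"
  have "0 < t" using False assms(2,3) by (auto simp: t_def min_def less_eq_real_def)
  moreover have "t \<le> 1" using assms(3) min.cobounded1[of "\<mu> x"] unfolding t_def by (meson order_trans)
  moreover have "fp_in \<mu> x t" by (simp add: fp_in_def t_def)
  ultimately have "fp_in_or_q k \<mu> top t"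
    using assms(1) unfolding in_q_fuzzy_fated_filter_def by blast
  then have "fp_in \<mu> top t"
    by (rule fp_in_if_fp_in_or_q_below_half[rotated]) (unfold t_def, rule min.cobounded2)
  then show ?thesis by (simp add: fp_in_def t_def)
qed

lemma in_q_fuzzy_fated_filter_mp_bound:
  assumes "in_q_fuzzy_fated_filter imp k \<mu>"
    and "\<forall>x. 0 \<le> \<mu> x \<and> \<mu> x \<le> 1"
  shows "min (min (\<mu> (imp a (imp (imp x y) x))) (\<mu> a)) ((1 - k) / 2) \<le> \<mu> x"
proof (cases "min (min (\<mu> (imp a (imp (imp x y) x))) (\<mu> a)) ((1 - k) / 2) \<le> 0")
  case True
  then show ?thesis using assms(2) by (meson order_trans)
next
  case False
  define t where "t = min (min (\<mu> (imp a (imp (imp x y) x))) (\<mu> a)) ((1 - k) / 2)"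
  have "0 < t" using False by (simp add: t_def not_le)
  moreover have "t \<le> 1"
    using assms(2) min.cobounded2[of _ "\<mu> a"] min.cobounded1[of "min _ (\<mu> a)"]
    unfolding t_def by (meson order_trans)
  moreover have "fp_in \<mu> (imp a (imp (imp x y) x)) t" "fp_in \<mu> a t"
    by (auto simp: fp_in_def t_def)
  ultimately have "fp_in_or_q k \<mu> x (min t t)"
    using assms(1) unfolding in_q_fuzzy_fated_filter_def by blast
  then have "fp_in \<mu> x t"
    by (intro fp_in_if_fp_in_or_q_below_half) (simp_all only: t_def min.idem min.cobounded2)
  then show ?thesis by (simp add: fp_in_def t_def)
qed

lemma level_set_k_fated_filter_if_bounds:
  assumes top_bound: "\<And>x. min (\<mu> x) ((1 - k) / 2) \<le> \<mu> top"
    and mp_bound: "\<And>x y a. min (min (\<mu> (imp a (imp (imp x y) x))) (\<mu> a)) ((1 - k) / 2) \<le> \<mu> x"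
    and "0 < t" and "level_set_k k \<mu> t \<noteq> {}"
  shows "fated_filter imp (level_set_k k \<mu> t)"
proof -
  obtain x where x: "x \<in> level_set_k k \<mu> t" using assms(4) by blast
  have "top \<in> level_set_k k \<mu> t"
    by (rule mem_level_set_k_of_min_le[OF \<open>0 < t\<close> x x]) (simp add: top_bound)
  moreover have "x \<in> level_set_k k \<mu> t"
    if "a \<in> level_set_k k \<mu> t" "imp a (imp (imp x y) x) \<in> level_set_k k \<mu> t" for x y a
    using mem_level_set_k_of_min_le[OF \<open>0 < t\<close> that(2,1) mp_bound[of a x y]] .
  ultimately show ?thesis unfolding fated_filter_def by blast
qed

lemma in_q_fuzzy_fated_filter_if_level_sets:
  assumes "\<forall>t. 0 < t \<and> t \<le> 1 \<longrightarrow>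
             level_set_k k \<mu> t = {} \<or> fated_filter imp (level_set_k k \<mu> t)"
  shows "in_q_fuzzy_fated_filter imp k \<mu>"
  unfolding in_q_fuzzy_fated_filter_def fp_in_or_q_iff_mem_level_set_k
proof (intro conjI allI impI)
  fix x t assume "0 < t \<and> t \<le> 1" and "fp_in \<mu> x t"
  then have "x \<in> level_set_k k \<mu> t" "fated_filter imp (level_set_k k \<mu> t)"
    using assms by (auto simp: level_set_k_def fp_in_def)
  then show "top \<in> level_set_k k \<mu> t" by (simp add: fated_filter_def)
next
  fix x a y t s assume "0 < t \<and> t \<le> 1 \<and> 0 < s \<and> s \<le> 1"
    and "fp_in \<mu> (imp a (imp (imp x y) x)) t" and "fp_in \<mu> a s"
  then have "0 < min t s \<and> min t s \<le> 1"
    and "imp a (imp (imp x y) x) \<in> level_set_k k \<mu> (min t s)"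
    and "a \<in> level_set_k k \<mu> (min t s)"
    by (auto simp: level_set_k_def fp_in_def)
  moreover from this have "fated_filter imp (level_set_k k \<mu> (min t s))"
    using assms by blast
  ultimately show "x \<in> level_set_k k \<mu> (min t s)" unfolding fated_filter_def by blast
qed

theorem theorem3p24:
  fixes neg :: "'a::{bounded_lattice,distrib_lattice} \<Rightarrow> 'a"
    and imp :: "'a \<Rightarrow> 'a \<Rightarrow> 'a"
    and k :: real and \<mu> :: "'a \<Rightarrow> real"
  assumes "R0_algebra neg imp"
    and "0 \<le> k" and "k < 1"
    and "\<forall>x. 0 \<le> \<mu> x \<and> \<mu> x \<le> 1"
  shows "in_q_fuzzy_fated_filter imp k \<mu> \<longleftrightarrow>
         (\<forall>t. 0 < t \<and> t \<le> 1 \<longrightarrow>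
            level_set_k k \<mu> t = {} \<or> fated_filter imp (level_set_k k \<mu> t))"
proof
  assume fuzzy: "in_q_fuzzy_fated_filter imp k \<mu>"
  note top_bound = in_q_fuzzy_fated_filter_top_bound[OF fuzzy \<open>k < 1\<close> assms(4)]
  note mp_bound = in_q_fuzzy_fated_filter_mp_bound[OF fuzzy assms(4)]
  show "\<forall>t. 0 < t \<and> t \<le> 1 \<longrightarrow>
          level_set_k k \<mu> t = {} \<or> fated_filter imp (level_set_k k \<mu> t)"
  proof (intro allI impI)
    fix t :: real assume "0 < t \<and> t \<le> 1"
    then have "level_set_k k \<mu> t \<noteq> {} \<Longrightarrow> fated_filter imp (level_set_k k \<mu> t)"
      by (intro level_set_k_fated_filter_if_bounds top_bound mp_bound) simp_all
    then show "level_set_k k \<mu> t = {} \<or> fated_filter imp (level_set_k k \<mu> t)" by blast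
  qed
qed (rule in_q_fuzzy_fated_filter_if_level_sets)

end
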